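(* In the CloseTop-1 data structure with $m$ Gaussian vectors, the probability that a given point $x\in\mathbb{S}^{d-1}$ is stored is at least $1-\frac{1}{m^{\Theta(1)}}$.
   Context: CloseTop-1 construction on $\mathcal{S}\subseteq\mathbb{S}^{d-1}$: sample $a_1,\dots,a_m$ i.i.d. from $\mathcal{N}(0,1)^d$; each point $x\in\mathcal{S}$ is stored in bucket $i$, where $i$ is the smallest index in $[m]$ such that $\sqrt{2\log m}-\frac32\frac{\log\log m}{\sqrt{2\log m}}\le\langle a_i,x\rangle\le\sqrt{2\log m}$; if no such index exists, $x$ is not stored. Asymptotics are as $m\to\infty$. *)

theory Defs
  imports "HOL-Probability.Probability"
begin

definition std_gauss :: "real measure" where
  "std_gauss = density lborel std_normal_density"

text \<open>Joint law of the m i.i.d. vectors a_0,...,a_{m-1} drawn from N(0,1)^d: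
  a point a of the space gives the j-th coordinate of the i-th vector as a i j.\<close>
definition closetop_gaussians :: "nat \<Rightarrow> nat \<Rightarrow> (nat \<Rightarrow> nat \<Rightarrow> real) measure" where
  "closetop_gaussians m d = PiM {..<m} (\<lambda>i. PiM {..<d} (\<lambda>j. std_gauss))"

definition inner_d :: "nat \<Rightarrow> (nat \<Rightarrow> real) \<Rightarrow> (nat \<Rightarrow> real) \<Rightarrow> real" where
  "inner_d d u v = (\<Sum>j<d. u j * v j)"

text \<open>Thresholds of CloseTop-1 (log is the natural logarithm).\<close>
definition closetop_upper :: "nat \<Rightarrow> real" where
  "closetop_upper m = sqrt (2 * ln (real m))"

definition closetop_lower :: "nat \<Rightarrow> real" where
  "closetop_lower m = sqrt (2 * ln (real m)) - 3 / 2 * ln (ln (real m)) / sqrt (2 * ln (real m))"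

definition closetop_good :: "nat \<Rightarrow> nat \<Rightarrow> (nat \<Rightarrow> real) \<Rightarrow> (nat \<Rightarrow> nat \<Rightarrow> real) \<Rightarrow> nat \<Rightarrow> bool" where
  "closetop_good m d x a i \<longleftrightarrow>
     closetop_lower m \<le> inner_d d (a i) x \<and> inner_d d (a i) x \<le> closetop_upper m"

definition closetop_bucket :: "nat \<Rightarrow> nat \<Rightarrow> (nat \<Rightarrow> real) \<Rightarrow> (nat \<Rightarrow> nat \<Rightarrow> real) \<Rightarrow> nat option" where
  "closetop_bucket m d x a =
     (if \<exists>i<m. closetop_good m d x a i then Some (LEAST i. i < m \<and> closetop_good m d x a i) else None)"

definition closetop_stored :: "nat \<Rightarrow> nat \<Rightarrow> (nat \<Rightarrow> real) \<Rightarrow> (nat \<Rightarrow> nat \<Rightarrow> real) \<Rightarrow> bool" where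
  "closetop_stored m d x a \<longleftrightarrow> closetop_bucket m d x a \<noteq> None"

end

theory Submission
  imports Defs "HOL-Real_Asymp.Real_Asymp"
begin

(* For a unit vector x the projections <a_i, x> are independent standard Gaussians, so x is not
   stored with probability (1 - p)^m <= exp (- m p), where p is the Gaussian mass of the window
   [L, U], U = sqrt (2 ln m), L = U - 3/2 ln ln m / U. On the first 1/U of the window the density
   is at least its value at L + 1/U, which exceeds exp (- U^2 / 2) = 1/m by a factor of order
   (ln m)^(3/2). Hence m p >= c ln m, and x is stored with probability at least 1 - m^(-c). *)

lemma prob_space_std_gauss: "prob_space std_gauss"
  unfolding std_gauss_def by (rule prob_space_normal_density) simp

lemma sets_std_gauss [simp, measurable_cong]: "sets std_gauss = sets borel"
  unfolding std_gauss_def by simp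

lemma space_std_gauss [simp]: "space std_gauss = UNIV"
  unfolding std_gauss_def by simp

lemma indep_vars_PiM_components:
  assumes I: "finite I" and M: "\<And>i. i \<in> I \<Longrightarrow> prob_space (M i)"
  shows "prob_space.indep_vars (PiM I M) M (\<lambda>i \<omega>. \<omega> i) I"
proof -
  interpret prob_space "PiM I M" by (rule prob_space_PiM) (rule M)
  show ?thesis
  proof (cases "I = {}")
    case True
    then show ?thesis unfolding indep_vars_def indep_sets_def by simp
  next
    case False
    have "distr (PiM I M) (PiM I M) (\<lambda>\<omega>. \<lambda>i\<in>I. \<omega> i) = distr (PiM I M) (PiM I M) (\<lambda>\<omega>. \<omega>)"
      by (intro distr_cong) (auto simp: space_PiM)
    also have "\<dots> = PiM I (\<lambda>i. distr (PiM I M) (M i) (\<lambda>\<omega>. \<omega> i))"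
      by (simp add: distr_PiM_component M cong: PiM_cong)
    finally show ?thesis
      by (subst indep_vars_iff_distr_eq_PiM'[OF False]) auto
  qed
qed

lemma distributed_inner_d_std_gauss:
  assumes "j\<^sub>0 < d" "x j\<^sub>0 \<noteq> 0"
  shows "distributed (PiM {..<d} (\<lambda>_. std_gauss)) lborel (\<lambda>v. inner_d d v x)
           (normal_density 0 (sqrt (\<Sum>j<d. (x j)\<^sup>2)))"
proof -
  let ?N = "PiM {..<d} (\<lambda>_. std_gauss)"
  interpret prob_space ?N by (rule prob_space_PiM) (rule prob_space_std_gauss)
  define J where "J = {j \<in> {..<d}. x j \<noteq> 0}"
  have J: "finite J" "J \<noteq> {}" "J \<subseteq> {..<d}" using assms by (auto simp: J_def)
  have "indep_vars (\<lambda>_. std_gauss) (\<lambda>j v. v j) J"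
    using indep_vars_PiM_components[of "{..<d}" "\<lambda>_. std_gauss"] J(3)
    by (auto intro: indep_vars_subset simp: prob_space_std_gauss)
  then have indep: "indep_vars (\<lambda>_. borel) (\<lambda>j v. x j * v j) J"
    by (rule indep_vars_compose2[where Y = "\<lambda>j r. x j * r"]) simp
  have normal: "distributed ?N lborel (\<lambda>v. x j * v j) (normal_density 0 \<bar>x j\<bar>)" if "j \<in> J" for j
  proof -
    have "distr ?N lborel (\<lambda>v. v j) = distr ?N std_gauss (\<lambda>v. v j)"
      by (intro distr_cong) auto
    also have "\<dots> = std_gauss"
      using that J(3) by (intro distr_PiM_component) (auto simp: prob_space_std_gauss)
    finally have "distributed ?N lborel (\<lambda>v. v j) std_normal_density"
      using that J(3) by (auto simp: distributed_def std_gauss_def)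
    then show ?thesis
      using normal_density_affine[of "\<lambda>v. v j" 0 1 "x j" 0] that by (simp add: J_def)
  qed
  have "distributed ?N lborel (\<lambda>v. \<Sum>j\<in>J. x j * v j) (normal_density 0 (sqrt (\<Sum>j\<in>J. \<bar>x j\<bar>\<^sup>2)))"
    using sum_indep_normal[OF J(1,2) indep _ normal] by (simp add: J_def)
  moreover have "(\<Sum>j\<in>J. \<bar>x j\<bar>\<^sup>2) = (\<Sum>j<d. (x j)\<^sup>2)"
    unfolding power2_abs by (rule sum.mono_neutral_left) (auto simp: J_def)
  moreover have "inner_d d v x = (\<Sum>j\<in>J. x j * v j)" for v
    unfolding inner_d_def by (rule sum.mono_neutral_cong_right) (auto simp: J_def)
  ultimately show ?thesis by simp
qed

lemma prob_PiM_ex_component_in: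
  assumes N: "prob_space N" and A: "A \<in> sets N" and I: "finite I"
  shows "measure (PiM I (\<lambda>_. N)) {\<omega> \<in> space (PiM I (\<lambda>_. N)). \<exists>i\<in>I. \<omega> i \<in> A}
           = 1 - (1 - measure N A) ^ card I"
proof -
  interpret finite_product_prob_space "\<lambda>_. N" I
    using N I by (simp add: finite_product_prob_space_def finite_product_sigma_finite_def
        product_prob_space_def product_sigma_finite_def prob_space_imp_sigma_finite
        product_prob_space_axioms_def finite_product_sigma_finite_axioms_def)
  let ?B = "Pi\<^sub>E I (\<lambda>_. space N - A)"
  have B: "?B \<in> sets (PiM I (\<lambda>_. N))" using A I by (intro sets_PiM_I_finite) auto
  have "{\<omega> \<in> space (PiM I (\<lambda>_. N)). \<exists>i\<in>I. \<omega> i \<in> A} = space (PiM I (\<lambda>_. N)) - ?B"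
    by (auto simp: space_PiM PiE_iff extensional_def)
  moreover have "prob ?B = (1 - measure N A) ^ card I"
    using prob_times[of "\<lambda>_. space N - A"] A I prob_space.prob_compl[OF N A] by simp
  ultimately show ?thesis using prob_compl[OF B] by simp
qed

lemma prob_closetop_stored:
  assumes x: "(\<Sum>j<d. (x j)\<^sup>2) = 1"
  shows "measure (closetop_gaussians m d) {a \<in> space (closetop_gaussians m d). closetop_stored m d x a}
           = 1 - (1 - measure std_gauss {closetop_lower m..closetop_upper m}) ^ m"
proof -
  let ?N = "PiM {..<d} (\<lambda>_. std_gauss)"
  let ?f = "\<lambda>v. inner_d d v x"
  define A where "A = ?f -` {closetop_lower m..closetop_upper m} \<inter> space ?N"
  have "\<exists>j<d. x j \<noteq> 0"
  proof (rule ccontr)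
    assume "\<nexists>j. j < d \<and> x j \<noteq> 0"
    then have "(\<Sum>j<d. (x j)\<^sup>2) = 0" by simp
    with x show False by simp
  qed
  then obtain j where j: "j < d" "x j \<noteq> 0" by blast
  have "distributed ?N lborel ?f std_normal_density"
    using distributed_inner_d_std_gauss[of j d x] j x by simp
  then have f: "?f \<in> borel_measurable ?N" and law: "distr ?N lborel ?f = std_gauss"
    by (simp_all add: distributed_def std_gauss_def)
  have A: "A \<in> sets ?N" unfolding A_def using f by (rule measurable_sets) simp
  have "measure ?N A = measure (distr ?N lborel ?f) {closetop_lower m..closetop_upper m}"
    unfolding A_def using f by (subst measure_distr) auto
  then have "measure ?N A = measure std_gauss {closetop_lower m..closetop_upper m}"
    by (simp only: law)
  moreover have "{a \<in> space (closetop_gaussians m d). closetop_stored m d x a}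
      = {\<omega> \<in> space (PiM {..<m} (\<lambda>_. ?N)). \<exists>i\<in>{..<m}. \<omega> i \<in> A}"
  proof -
    have "closetop_stored m d x \<omega> \<longleftrightarrow> (\<exists>i<m. closetop_good m d x \<omega> i)" for \<omega>
      by (simp add: closetop_stored_def closetop_bucket_def)
    moreover have "\<omega> i \<in> A \<longleftrightarrow> closetop_good m d x \<omega> i"
      if "\<omega> \<in> space (PiM {..<m} (\<lambda>_. ?N))" "i < m" for \<omega> i
      using that by (auto simp: A_def closetop_good_def space_PiM PiE_iff)
    ultimately show ?thesis by (auto simp: closetop_gaussians_def)
  qed
  ultimately show ?thesis
    using prob_PiM_ex_component_in[OF prob_space_PiM[OF prob_space_std_gauss] A, of "{..<m}"]
    by (simp add: closetop_gaussians_def)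
qed

lemma std_gauss_interval_ge:
  fixes L U \<delta> :: real
  assumes "0 \<le> L" "0 < \<delta>" "L + \<delta> \<le> U"
  shows "\<delta> * std_normal_density (L + \<delta>) \<le> measure std_gauss {L..U}"
proof -
  interpret prob_space std_gauss by (rule prob_space_std_gauss)
  have min: "std_normal_density (L + \<delta>) \<le> std_normal_density t" if "t \<in> {L..L + \<delta>}" for t
  proof -
    have "t\<^sup>2 \<le> (L + \<delta>)\<^sup>2" using that assms by (intro power_mono) auto
    then show ?thesis unfolding std_normal_density_def by (intro mult_left_mono) auto
  qed
  have "ennreal (\<delta> * std_normal_density (L + \<delta>))
      = (\<integral>\<^sup>+t. ennreal (std_normal_density (L + \<delta>)) * indicator {L..L + \<delta>} t \<partial>lborel)"
    using assms by (simp add: nn_integral_cmult_indicator ennreal_mult' mult.commute)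
  also have "\<dots> \<le> (\<integral>\<^sup>+t. ennreal (std_normal_density t) * indicator {L..L + \<delta>} t \<partial>lborel)"
    by (intro nn_integral_mono) (auto simp: indicator_def min)
  also have "\<dots> = emeasure std_gauss {L..L + \<delta>}"
    unfolding std_gauss_def by (subst emeasure_density) auto
  finally have "\<delta> * std_normal_density (L + \<delta>) \<le> measure std_gauss {L..L + \<delta>}"
    by (simp add: emeasure_eq_measure)
  also have "\<dots> \<le> measure std_gauss {L..U}"
    using assms by (intro finite_measure_mono) auto
  finally show ?thesis .
qed

lemma exp_mult_std_normal_density_shift:
  fixes l q :: real
  assumes "0 < l"
  shows "exp l * std_normal_density (sqrt (2 * l) - q / sqrt (2 * l))
           = exp (q - q\<^sup>2 / (4 * l)) / sqrt (2 * pi)"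
proof -
  have "l - (sqrt (2 * l) - q / sqrt (2 * l))\<^sup>2 / 2 = q - q\<^sup>2 / (4 * l)"
    using assms by (simp add: power2_eq_square field_simps)
  then show ?thesis
    unfolding std_normal_density_def by (simp add: exp_add[symmetric])
qed

lemma std_gauss_window_ge:
  fixes l :: real
  assumes l: "0 < l" and "1 \<le> 3 / 2 * ln l"
    and L: "0 \<le> sqrt (2 * l) - 3 / 2 * ln l / sqrt (2 * l)"
    and tail: "1 / 2 \<le> exp (- ((3 / 2 * ln l - 1)\<^sup>2 / (4 * l)))"
  shows "exp (-1) / (4 * sqrt pi) * l
           \<le> exp l * measure std_gauss {sqrt (2 * l) - 3 / 2 * ln l / sqrt (2 * l)..sqrt (2 * l)}"
proof -
  define s where "s = sqrt (2 * l)"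
  define q where "q = 3 / 2 * ln l - 1"
  have s: "0 < s" "s * sqrt (2 * pi) = 2 * sqrt pi * sqrt l"
    using l by (simp_all add: s_def real_sqrt_mult)
  have "1 / s \<le> 3 / 2 * ln l / s"
    using s \<open>1 \<le> 3 / 2 * ln l\<close> by (intro divide_right_mono) auto
  then have "1 / s * std_normal_density (s - 3 / 2 * ln l / s + 1 / s)
      \<le> measure std_gauss {s - 3 / 2 * ln l / s..s}"
    using L s unfolding s_def by (intro std_gauss_interval_ge) auto
  moreover have "s - 3 / 2 * ln l / s + 1 / s = s - q / s"
    using s by (simp add: q_def field_simps)
  ultimately have window: "1 / s * std_normal_density (s - q / s)
      \<le> measure std_gauss {s - 3 / 2 * ln l / s..s}"
    by (simp only:)
  have "exp (3 / 2 * ln l) = l powr (1 + 1 / 2)"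
    using l by (simp add: powr_def)
  also have "\<dots> = l * sqrt l"
    using l by (subst powr_add) (simp add: powr_half_sqrt)
  finally have "exp q = exp (-1) * (l * sqrt l)"
    unfolding q_def diff_conv_add_uminus exp_add by (metis mult.commute)
  then have E: "exp (q - q\<^sup>2 / (4 * l)) = exp (-1) * (l * sqrt l) * exp (- (q\<^sup>2 / (4 * l)))"
    unfolding diff_conv_add_uminus exp_add by simp
  have "exp (-1) / (4 * sqrt pi) * l = exp (-1) / (2 * sqrt pi) * l * (1 / 2)"
    by simp
  also have "\<dots> \<le> exp (-1) / (2 * sqrt pi) * l * exp (- (q\<^sup>2 / (4 * l)))"
    using tail l unfolding q_def by (intro mult_left_mono) auto
  also have "\<dots> = exp (q - q\<^sup>2 / (4 * l)) / (s * sqrt (2 * pi))"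
    unfolding E s(2) using l by simp
  also have "\<dots> = exp l * (1 / s * std_normal_density (s - q / s))"
    using exp_mult_std_normal_density_shift[OF l, of q] by (simp add: s_def)
  also have "\<dots> \<le> exp l * measure std_gauss {s - 3 / 2 * ln l / s..s}"
    using window by (intro mult_left_mono) auto
  finally show ?thesis
    unfolding s_def .
qed

lemma eventually_std_gauss_window_ge:
  "\<forall>\<^sub>F l in at_top. exp (-1) / (4 * sqrt pi) * l
     \<le> exp l * measure std_gauss {sqrt (2 * l) - 3 / 2 * ln l / sqrt (2 * l)..sqrt (2 * l)}"
proof -
  have "\<forall>\<^sub>F l in at_top. 0 < l \<and> 1 \<le> 3 / 2 * ln l
      \<and> 0 \<le> sqrt (2 * l) - 3 / 2 * ln l / sqrt (2 * l)
      \<and> 1 / 2 \<le> exp (- ((3 / 2 * ln l - 1)\<^sup>2 / (4 * l)))"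
    by (intro eventually_conj; real_asymp)
  then show ?thesis
    by (rule eventually_mono) (elim conjE std_gauss_window_ge)
qed

lemma one_minus_power_le_exp:
  fixes p :: real
  assumes "p \<le> 1"
  shows "(1 - p) ^ n \<le> exp (- (real n * p))"
proof -
  have "(1 - p) ^ n \<le> exp (- p) ^ n"
    using assms by (intro power_mono) (auto simp: exp_ge_add_one_self[of "- p", simplified])
  then show ?thesis by (simp add: exp_of_nat_mult[symmetric])
qed

theorem lemma3:
  shows "\<exists>c>0. \<exists>M::nat. \<forall>m\<ge>M. \<forall>d::nat. \<forall>x::nat \<Rightarrow> real.
           (\<Sum>j<d. (x j)\<^sup>2) = 1 \<longrightarrow>
           measure (closetop_gaussians m d)
             {a \<in> space (closetop_gaussians m d). closetop_stored m d x a}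
           \<ge> 1 - 1 / (real m) powr c"
proof -
  define c :: real where "c = exp (-1) / (4 * sqrt pi)"
  let ?p = "\<lambda>m. measure std_gauss {closetop_lower m..closetop_upper m}"
  have "filterlim (\<lambda>m::nat. ln (real m)) at_top sequentially"
    by (rule filterlim_compose[OF ln_at_top filterlim_real_sequentially])
  then have "\<forall>\<^sub>F m in sequentially. c * ln (real m) \<le> exp (ln (real m)) * ?p m"
    using eventually_compose_filterlim[OF eventually_std_gauss_window_ge]
    unfolding c_def closetop_lower_def closetop_upper_def by blast
  moreover have "\<forall>\<^sub>F m in sequentially. (0::nat) < m"
    by (rule eventually_gt_at_top)
  ultimately have "\<forall>\<^sub>F m in sequentially. 0 < m \<and> c * ln (real m) \<le> real m * ?p m"
    by eventually_elim simp
  then obtain M where M: "\<And>m. m \<ge> M \<Longrightarrow> 0 < m \<and> c * ln (real m) \<le> real m * ?p m"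
    unfolding eventually_sequentially by blast
  have "1 - 1 / real m powr c \<le> measure (closetop_gaussians m d)
          {a \<in> space (closetop_gaussians m d). closetop_stored m d x a}"
    if "m \<ge> M" and x: "(\<Sum>j<d. (x j)\<^sup>2) = 1" for m d x
  proof -
    have m: "0 < m" and mass: "c * ln (real m) \<le> real m * ?p m" using M[OF \<open>m \<ge> M\<close>] by auto
    have "(1 - ?p m) ^ m \<le> exp (- (real m * ?p m))"
      by (intro one_minus_power_le_exp prob_space.prob_le_1 prob_space_std_gauss)
    also have "\<dots> \<le> exp (- (c * ln (real m)))" using mass by simp
    also have "\<dots> = 1 / real m powr c" using m by (simp add: powr_def exp_minus inverse_eq_divide)
    finally show ?thesis using prob_closetop_stored[OF x, of m] by simp
  qed
  moreover have "c > 0" unfolding c_def by simp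
  ultimately show ?thesis by blast
qed

end
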